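(* Let $V$ be a real Banach space, let $\Gamma$ be a subgroup of the bijective bounded linear operators on $V$, and let $f \in C^1([0,\infty) \times V, V)$ satisfy $f(t,Tu) = T f(t,u)$ for all $T \in \Gamma$, $u \in V$, $t \ge 0$. Let $V_\Gamma = \{u \in V : Tu = u \ \forall T \in \Gamma\}$ and assume $\dim V_\Gamma < \infty$. Then there exists a bounded linear projection $P$ with $\operatorname{im}(P) = V_\Gamma$; moreover $Qf(t,Pv) = 0$ for all $t, v$, where $Q = I - P$. If, in addition, there is $\lambda < 0$ such that $$\frac{(Qw,\, Q\, D_u f(t,u)\, w)_+}{\|Qw\|^2} \le \lambda \quad \text{for all } t \ge 0,\ u \in V,\ w \in V \text{ with } Qw \ne 0,$$ then every solution $u$ of $\dot u = f(t,u)$ converges exponentially to $V_\Gamma$: there is a constant $K$ (depending on the solution) with $d(u(t), V_\Gamma) \le K e^{\lambda t}$ for all $t \ge 0$.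
   Context: For a real Banach space $V$, the right semi-inner product is $(a,b)_+ := \|a\| \lim_{h \to 0^+} \frac{\|a + hb\| - \|a\|}{h}$. $d(u, S) = \inf_{s \in S}\|u - s\|$, and $D_u$ is the Fréchet derivative in $u$. Solutions are continuously differentiable curves $[0,\infty) \to V$ satisfying the equation; solutions of the initial value problem are assumed to exist and to be unique. *)

theory Defs
  imports "HOL-Analysis.Analysis"
begin

definition semi_inner_plus :: "'a::real_normed_vector \<Rightarrow> 'a \<Rightarrow> real" where
  "semi_inner_plus a b = norm a * Lim (at_right 0) (\<lambda>h. (norm (a + h *\<^sub>R b) - norm a) / h)"

definition fixed_space :: "('a \<Rightarrow> 'a) set \<Rightarrow> 'a set" where
  "fixed_space G = {u. \<forall>T\<in>G. T u = u}"

definition operator_subgroup :: "('a::real_normed_vector \<Rightarrow> 'a) set \<Rightarrow> bool" where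
  "operator_subgroup G \<longleftrightarrow>
     (\<forall>T\<in>G. bounded_linear T \<and> bij T) \<and> id \<in> G \<and>
     (\<forall>S\<in>G. \<forall>T\<in>G. S \<circ> T \<in> G) \<and> (\<forall>T\<in>G. inv T \<in> G)"

definition is_solution :: "(real \<Rightarrow> 'a::real_normed_vector \<Rightarrow> 'a) \<Rightarrow> (real \<Rightarrow> 'a) \<Rightarrow> bool" where
  "is_solution f u \<longleftrightarrow>
     (\<exists>u'. continuous_on {0..} u' \<and>
        (\<forall>t\<ge>0. (u has_vector_derivative u' t) (at t within {0..}) \<and> u' t = f t (u t)))"

end

theory Submission
  imports Defs
begin

(*
  The fixed space V_G is finite-dimensional, so a bounded projection P onto it is built one basis
  vector at a time: Hahn-Banach (via Zorn on dominated graphs) provides a bounded functional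
  separating the next vector from the closed span of the previous ones.  Equivariance makes V_G
  invariant under f t, whence Q f t (P v) = 0 for Q = I - P.

  For a solution u put x = Q u.  The right derivative of the norm, (a, b)_+ / norm a, is
  subadditive and Lipschitz in b, which gives a mean value inequality for it; along the segment
  from P (u t) to u t it turns the dissipativity bound on Q D_u f into (x, x')_+ <= lam * norm x ^ 2.
  So the upper right Dini derivative of norm x is at most lam * norm x, and a Dini-derivative
  version of Gronwall's lemma yields norm (Q u t) <= norm (Q u 0) * exp (lam * t), which bounds
  the distance of u t to V_G.
*)

section \<open>Hahn-Banach and bounded projections onto finite-dimensional subspaces\<close>

definition sublinear :: "('a::real_vector \<Rightarrow> real) \<Rightarrow> bool" where
  "sublinear p \<longleftrightarrow>
     (\<forall>x y. p (x + y) \<le> p x + p y) \<and> (\<forall>c x. c \<ge> 0 \<longrightarrow> p (c *\<^sub>R x) = c * p x)"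

lemma sublinear_zero: "sublinear p \<Longrightarrow> p 0 = 0"
  unfolding sublinear_def by (metis mult_zero_left order_refl scaleR_zero_left)

text \<open>A partial linear functional dominated by p is encoded by its graph: a subspace of
  'a \<times> real lying below the graph of p.\<close>

lemma dominated_graph_single_valued:
  assumes p: "sublinear p" and H: "subspace H" and dom: "H \<subseteq> {(x, y). y \<le> p x}"
    and "(x, y) \<in> H" "(x, y') \<in> H"
  shows "y = y'"
proof -
  have "(x, y) - (x, y') \<in> H" "(x, y') - (x, y) \<in> H"
    using subspace_diff[OF H] assms(4,5) by blast+
  then have "(0, y - y') \<in> H" "(0, y' - y) \<in> H" by simp_all
  then have "y - y' \<le> p 0" "y' - y \<le> p 0" using dom by auto
  then show ?thesis using sublinear_zero[OF p] by linarith
qed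

lemma subspace_Union_chain:
  assumes C: "C \<noteq> {}" "subset.chain {S. subspace S} C"
  shows "subspace (\<Union>C)"
proof -
  have sub: "subspace S" if "S \<in> C" for S using C(2) that unfolding subset.chain_def by blast
  have common: "\<exists>S\<in>C. a \<in> S \<and> b \<in> S" if "a \<in> \<Union>C" "b \<in> \<Union>C" for a b
    using that C(2) unfolding subset.chain_def by blast
  show ?thesis
    unfolding subspace_def
  proof (intro conjI ballI allI)
    obtain S where "S \<in> C" using C(1) by blast
    then show "0 \<in> \<Union>C" using sub subspace_0 by blast
  next
    fix a b assume "a \<in> \<Union>C" "b \<in> \<Union>C"
    then show "a + b \<in> \<Union>C" using common sub subspace_add by blast
  next
    fix c a assume "a \<in> \<Union>C"
    then show "c *\<^sub>R a \<in> \<Union>C" using sub subspace_scale by blast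
  qed
qed

lemma dominated_graph_extension_bounds:
  assumes p: "sublinear p" and H: "subspace H" and dom: "H \<subseteq> {(x, y). y \<le> p x}"
  obtains c where "\<And>m y. (m, y) \<in> H \<Longrightarrow> y - p (m - x0) \<le> c"
    and "\<And>m y. (m, y) \<in> H \<Longrightarrow> c \<le> p (m + x0) - y"
proof -
  have sep: "y1 - p (m1 - x0) \<le> p (m2 + x0) - y2" if "(m1, y1) \<in> H" "(m2, y2) \<in> H" for m1 y1 m2 y2
  proof -
    have "(m1 + m2, y1 + y2) \<in> H" using subspace_add[OF H that] by simp
    then have "y1 + y2 \<le> p ((m1 - x0) + (m2 + x0))" using dom by auto
    also have "\<dots> \<le> p (m1 - x0) + p (m2 + x0)" using p unfolding sublinear_def by blast
    finally show ?thesis by simp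
  qed
  have "(0, 0) \<in> H" using subspace_0[OF H] by (simp add: zero_prod_def)
  then have "bdd_above {y - p (m - x0) | m y. (m, y) \<in> H}"
    unfolding bdd_above_def by (intro exI[of _ "p x0"]) (use sep in fastforce)
  then show ?thesis
    using sep \<open>(0, 0) \<in> H\<close>
    by (intro that[of "Sup {y - p (m - x0) | m y. (m, y) \<in> H}"]) (auto intro!: cSup_upper cSup_least)
qed

lemma dominated_graph_insert:
  assumes p: "sublinear p" and H: "subspace H" and dom: "H \<subseteq> {(x, y). y \<le> p x}"
    and c_ge: "\<And>m y. (m, y) \<in> H \<Longrightarrow> y - p (m - x0) \<le> c"
    and c_le: "\<And>m y. (m, y) \<in> H \<Longrightarrow> c \<le> p (m + x0) - y"
  shows "span (insert (x0, c) H) \<subseteq> {(x, y). y \<le> p x}"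
proof
  have phom: "\<And>a x. a \<ge> 0 \<Longrightarrow> p (a *\<^sub>R x) = a * p x"
    using p unfolding sublinear_def by blast
  have extended: "y + t * c \<le> p (m + t *\<^sub>R x0)" if "(m, y) \<in> H" for m y t
  proof (cases t "0::real" rule: linorder_cases)
    case greater
    have "((1/t) *\<^sub>R m, y / t) \<in> H" using subspace_scale[OF H that, of "1/t"] by simp
    from c_le[OF this] have "t * c \<le> t * p ((1/t) *\<^sub>R m + x0) - y"
      using greater by (simp add: field_simps)
    also have "t * p ((1/t) *\<^sub>R m + x0) = p (t *\<^sub>R ((1/t) *\<^sub>R m + x0))"
      using phom[of t] greater by simp
    also have "t *\<^sub>R ((1/t) *\<^sub>R m + x0) = m + t *\<^sub>R x0"
      using greater by (simp add: algebra_simps)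
    finally show ?thesis by simp
  next
    case less
    have "((1/(- t)) *\<^sub>R m, y / (- t)) \<in> H" using subspace_scale[OF H that, of "1/(- t)"] by simp
    from c_ge[OF this] have "y - (- t) * p ((1/(- t)) *\<^sub>R m - x0) \<le> (- t) * c"
      using less by (simp add: field_simps)
    also have "(- t) * p ((1/(- t)) *\<^sub>R m - x0) = p ((- t) *\<^sub>R ((1/(- t)) *\<^sub>R m - x0))"
      using phom[of "- t"] less by simp
    also have "(- t) *\<^sub>R ((1/(- t)) *\<^sub>R m - x0) = m + t *\<^sub>R x0"
      using less by (simp add: algebra_simps)
    finally show ?thesis by simp
  qed (use dom that in auto)
  fix a assume "a \<in> span (insert (x0, c) H)"
  then obtain m y t where "(m, y) \<in> H" "a = (m + t *\<^sub>R x0, y + t * c)"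
    unfolding span_breakdown_eq span_eq_iff[THEN iffD2, OF H]
    by (cases a) (force simp: algebra_simps)
  then show "a \<in> {(x, y). y \<le> p x}" using extended by simp
qed

lemma hahn_banach:
  fixes p :: "'a::real_vector \<Rightarrow> real"
  assumes p: "sublinear p" and H0: "subspace H0" and dom0: "H0 \<subseteq> {(x, y). y \<le> p x}"
  obtains F where "linear F" "\<And>x. F x \<le> p x" "\<And>x y. (x, y) \<in> H0 \<Longrightarrow> F x = y"
proof -
  let ?A = "{H. subspace H \<and> H0 \<subseteq> H \<and> H \<subseteq> {(x, y). y \<le> p x}}"
  have "\<exists>M\<in>?A. \<forall>X\<in>?A. M \<subseteq> X \<longrightarrow> X = M"
  proof (rule subset_Zorn_nonempty)
    show "?A \<noteq> {}" using H0 dom0 by auto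
  next
    fix C assume C: "C \<noteq> {}" "subset.chain ?A C"
    then have chain: "subset.chain {S. subspace S} C" and CA: "C \<subseteq> ?A"
      unfolding subset.chain_def by auto
    have "subspace (\<Union>C)" by (rule subspace_Union_chain[OF C(1) chain])
    moreover have "H0 \<subseteq> \<Union>C" using C(1) CA by auto
    moreover have "\<Union>C \<subseteq> {(x, y). y \<le> p x}" using CA by auto
    ultimately show "\<Union>C \<in> ?A" by simp
  qed
  then obtain M where MA: "M \<in> ?A" and max: "\<forall>X\<in>?A. M \<subseteq> X \<longrightarrow> X = M" ..
  then have M: "subspace M" "H0 \<subseteq> M" and domM: "M \<subseteq> {(x, y). y \<le> p x}" by simp_all
  have total: "\<exists>y. (x0, y) \<in> M" for x0
  proof -
    obtain c where c: "span (insert (x0, c) M) \<subseteq> {(x, y). y \<le> p x}"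
      using dominated_graph_extension_bounds[OF p M(1) domM] dominated_graph_insert[OF p M(1) domM] by metis
    have sub: "M \<subseteq> span (insert (x0, c) M)"
      using span_superset[of "insert (x0, c) M"] by (meson dual_order.trans subset_insertI)
    have "span (insert (x0, c) M) \<in> ?A" using subset_trans[OF M(2) sub] c by simp
    then have "span (insert (x0, c) M) = M" using max sub by simp
    then show ?thesis using span_base[of "(x0, c)" "insert (x0, c) M"] by auto
  qed
  define F where "F x = (THE y. (x, y) \<in> M)" for x
  have F_unique: "F x = y" if "(x, y) \<in> M" for x y
    unfolding F_def using that dominated_graph_single_valued[OF p M(1) domM] by blast
  have F_graph: "(x, F x) \<in> M" for x
    using total[of x] F_unique by blast
  have "linear F"
  proof
    show "F (x + y) = F x + F y" for x y
      using subspace_add[OF M(1) F_graph F_graph] F_unique by simp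
    show "F (c *\<^sub>R x) = c *\<^sub>R F x" for c x
      using subspace_scale[OF M(1) F_graph, of c] F_unique by simp
  qed
  moreover have "F x \<le> p x" for x using domM F_graph by blast
  moreover have "F x = y" if "(x, y) \<in> H0" for x y using M(2) F_unique that by blast
  ultimately show ?thesis by (rule that)
qed

lemma abs_mult_infdist_le_norm:
  fixes M :: "'a::real_normed_vector set"
  assumes M: "subspace M" and x: "x - t *\<^sub>R b \<in> M"
  shows "\<bar>t\<bar> * infdist b M \<le> norm x"
proof (cases "t = 0")
  case False
  have "infdist b M \<le> dist b (- (1/t) *\<^sub>R (x - t *\<^sub>R b))"
    using infdist_le subspace_scale[OF M x] by blast
  also have "\<dots> = norm x / \<bar>t\<bar>"
    using False by (simp add: dist_norm algebra_simps)
  finally show ?thesis using False by (simp add: field_simps)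
qed simp

lemma bounded_functional_separating_point:
  fixes M :: "'a::real_normed_vector set"
  assumes M: "subspace M" "closed M" and b: "b \<notin> M"
  obtains \<phi> :: "'a \<Rightarrow> real" where "bounded_linear \<phi>" "\<forall>m\<in>M. \<phi> m = 0" "\<phi> b = 1"
proof -
  define d where "d = infdist b M"
  have d: "d > 0"
    unfolding d_def using M b subspace_0 by (intro infdist_pos_not_in_closed) auto
  define p where "p x = norm x / d" for x :: 'a
  have p: "sublinear p"
    unfolding sublinear_def p_def using d
    by (auto simp: add_divide_distrib[symmetric] divide_right_mono norm_triangle_ineq)
  \<comment> \<open>the graph of m + t b \<mapsto> t on span (insert b M)\<close>
  define H0 where "H0 = span (insert (b, 1::real) (M \<times> {0}))"
  have H0_iff: "(x, t) \<in> H0 \<longleftrightarrow> x - t *\<^sub>R b \<in> M" for x t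
    unfolding H0_def span_breakdown_eq span_eq_iff[THEN iffD2, OF subspace_Times[OF M(1) subspace_single_0]]
    by auto
  have "t \<le> p x" if "(x, t) \<in> H0" for x t
  proof -
    have "t * d \<le> \<bar>t\<bar> * d" using d by (intro mult_right_mono) auto
    also have "\<dots> \<le> norm x" using abs_mult_infdist_le_norm[OF M(1)] that by (simp add: H0_iff d_def)
    finally show ?thesis using d by (simp add: p_def field_simps)
  qed
  then obtain F where F: "linear F" "\<And>x. F x \<le> p x" "\<And>x t. (x, t) \<in> H0 \<Longrightarrow> F x = t"
    using hahn_banach[OF p, of H0] unfolding H0_def by blast
  have "norm (F x) \<le> norm x * (1/d)" for x
    using F(2)[of x] F(2)[of "- x"] linear_neg[OF F(1), of x]
    by (simp add: p_def abs_le_iff)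
  then have "bounded_linear F"
    using F(1) by (intro bounded_linear_intro[where K="1/d"]) (auto simp: linear_add linear_scale)
  moreover have "\<forall>m\<in>M. F m = 0" "F b = 1"
    using F(3) subspace_0[OF M(1)] by (simp_all add: H0_iff)
  ultimately show ?thesis by (rule that)
qed

lemma bounded_projection_insert:
  fixes b :: "'a::real_normed_vector"
  assumes P: "bounded_linear P" "\<And>v. P v \<in> span B" "\<And>v. v \<in> span B \<Longrightarrow> P v = v"
    and b: "b \<notin> span B"
  shows "\<exists>P'. bounded_linear P' \<and> (\<forall>v. P' v \<in> span (insert b B)) \<and> (\<forall>v\<in>span (insert b B). P' v = v)"
proof -
  \<comment> \<open>span B is the fixed-point set of the continuous map P, hence closed\<close>
  have "span B = {v. P v = v}" using P(2,3) by auto (metis P(2))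
  moreover have "closed {v. P v = v}"
    using P(1) by (intro closed_Collect_eq continuous_intros) (auto intro: linear_continuous_on)
  ultimately obtain \<phi> :: "'a \<Rightarrow> real" where
    \<phi>: "bounded_linear \<phi>" "\<forall>m\<in>span B. \<phi> m = 0" "\<phi> b = 1"
    using bounded_functional_separating_point[OF subspace_span _ b] by metis
  define P' where "P' x = P (x - \<phi> x *\<^sub>R b) + \<phi> x *\<^sub>R b" for x
  have "bounded_linear (\<lambda>x. \<phi> x *\<^sub>R b)"
    using bounded_linear_compose[OF bounded_linear_scaleR_left \<phi>(1)] .
  then have "bounded_linear P'"
    unfolding P'_def
    by (intro bounded_linear_add bounded_linear_compose[OF P(1)] bounded_linear_sub bounded_linear_ident)
  moreover have "P' v \<in> span (insert b B)" for v
  proof -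
    have "P (v - \<phi> v *\<^sub>R b) \<in> span (insert b B)" using P(2) span_mono[of B "insert b B"] by blast
    moreover have "\<phi> v *\<^sub>R b \<in> span (insert b B)" by (simp add: span_base span_scale)
    ultimately show ?thesis by (simp add: P'_def span_add)
  qed
  moreover have "P' v = v" if v: "v \<in> span (insert b B)" for v
  proof -
    obtain k where k: "v - k *\<^sub>R b \<in> span B" using v span_breakdown_eq by blast
    have "\<phi> v = \<phi> (v - k *\<^sub>R b) + k * \<phi> b"
      using \<phi>(1) by (simp add: linear_simps bounded_linear.linear)
    then have "\<phi> v = k" using \<phi> k by simp
    then show ?thesis unfolding P'_def using P(3)[OF k] by simp
  qed
  ultimately show ?thesis by blast
qed

lemma finite_span_bounded_projection:
  fixes B :: "'a::real_normed_vector set"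
  assumes "finite B"
  shows "\<exists>P. bounded_linear P \<and> (\<forall>v. P v \<in> span B) \<and> (\<forall>v\<in>span B. P v = v)"
  using assms
proof (induction B rule: finite_induct)
  case empty
  show ?case by (intro exI[of _ "\<lambda>_. 0"]) auto
next
  case (insert b B)
  then obtain P where P: "bounded_linear P" "\<And>v. P v \<in> span B" "\<And>v. v \<in> span B \<Longrightarrow> P v = v"
    by blast
  show ?case
  proof (cases "b \<in> span B")
    case True
    then show ?thesis using P by (simp add: span_redundant) blast
  next
    case False
    then show ?thesis using bounded_projection_insert[OF P] by blast
  qed
qed

section \<open>The right derivative of the norm\<close>

definition norm_dquot :: "'a::real_normed_vector \<Rightarrow> 'a \<Rightarrow> real \<Rightarrow> real" where
  "norm_dquot x y h = (norm (x + h *\<^sub>R y) - norm x) / h"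

definition norm_rderiv :: "'a::real_normed_vector \<Rightarrow> 'a \<Rightarrow> real" where
  "norm_rderiv x y = Inf (norm_dquot x y ` {0<..})"

lemma norm_dquot_mono:
  assumes h1: "0 < h1" and h12: "h1 \<le> h2"
  shows "norm_dquot x y h1 \<le> norm_dquot x y h2"
proof -
  define a where "a = h1 / h2"
  have a: "0 < a" "a \<le> 1" using h1 h12 unfolding a_def by auto
  \<comment> \<open>convexity of the norm along the segment from x to x + h2 y\<close>
  have "x + h1 *\<^sub>R y = (1 - a) *\<^sub>R x + a *\<^sub>R (x + h2 *\<^sub>R y)"
    using h1 h12 unfolding a_def by (simp add: algebra_simps)
  then have "norm (x + h1 *\<^sub>R y) \<le> (1 - a) * norm x + a * norm (x + h2 *\<^sub>R y)"
    using a norm_triangle_ineq[of "(1 - a) *\<^sub>R x" "a *\<^sub>R (x + h2 *\<^sub>R y)"] by simp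
  then show ?thesis
    using h1 h12 unfolding norm_dquot_def a_def by (simp add: field_simps)
qed

lemma norm_dquot_ge: "0 < h \<Longrightarrow> - norm y \<le> norm_dquot x y h"
  using norm_triangle_ineq4[of "x + h *\<^sub>R y" "h *\<^sub>R y"]
  by (simp add: norm_dquot_def field_simps)

lemma bdd_below_norm_dquot: "bdd_below (norm_dquot x y ` {0<..})"
  using norm_dquot_ge by (auto simp: bdd_below_def)

lemma norm_rderiv_le_dquot: "0 < h \<Longrightarrow> norm_rderiv x y \<le> norm_dquot x y h"
  unfolding norm_rderiv_def by (rule cInf_lower[OF _ bdd_below_norm_dquot]) simp

lemma norm_rderiv_greatest: "(\<And>h. 0 < h \<Longrightarrow> a \<le> norm_dquot x y h) \<Longrightarrow> a \<le> norm_rderiv x y"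
  unfolding norm_rderiv_def by (rule cInf_greatest) auto

lemma norm_dquot_tendsto: "(norm_dquot x y \<longlongrightarrow> norm_rderiv x y) (at_right 0)"
proof -
  have "(norm_dquot x y \<longlongrightarrow> Inf (norm_dquot x y ` ({0<..} \<inter> UNIV))) (at 0 within ({0<..} \<inter> UNIV))"
    by (rule Lim_right_bound[where K="- norm y"]) (auto intro: norm_dquot_mono norm_dquot_ge)
  then show ?thesis unfolding norm_rderiv_def by simp
qed

lemma semi_inner_plus_eq_norm_rderiv: "semi_inner_plus x y = norm x * norm_rderiv x y"
proof -
  have "(\<lambda>h. (norm (x + h *\<^sub>R y) - norm x) / h) = norm_dquot x y"
    by (simp add: fun_eq_iff norm_dquot_def)
  moreover have "Lim (at_right 0) (norm_dquot x y) = norm_rderiv x y"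
    by (rule tendsto_Lim) (auto intro: norm_dquot_tendsto)
  ultimately show ?thesis unfolding semi_inner_plus_def by simp
qed

lemma norm_rderiv_le_of_semi_inner_plus:
  assumes "z \<noteq> 0" and "semi_inner_plus z v / (norm z)\<^sup>2 \<le> lam"
  shows "norm_rderiv z v \<le> lam * norm z"
proof -
  have "norm_rderiv z v / norm z \<le> lam"
    using assms by (simp add: semi_inner_plus_eq_norm_rderiv power2_eq_square)
  then show ?thesis using assms(1) by (simp add: divide_le_eq mult.commute)
qed

lemma norm_dquot_add_le:
  assumes h: "0 < h"
  shows "norm_dquot x (y1 + y2) h \<le> norm_dquot x y1 (2 * h) + norm_dquot x y2 (2 * h)"
proof -
  have "x + h *\<^sub>R (y1 + y2) = (1/2) *\<^sub>R (x + (2 * h) *\<^sub>R y1) + (1/2) *\<^sub>R (x + (2 * h) *\<^sub>R y2)"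
    by (simp add: algebra_simps flip: scaleR_add_left)
  then have "norm (x + h *\<^sub>R (y1 + y2)) \<le> norm (x + (2 * h) *\<^sub>R y1) / 2 + norm (x + (2 * h) *\<^sub>R y2) / 2"
    using norm_triangle_ineq[of "(1/2) *\<^sub>R (x + (2 * h) *\<^sub>R y1)" "(1/2) *\<^sub>R (x + (2 * h) *\<^sub>R y2)"]
    by simp
  then have "norm_dquot x (y1 + y2) h
      \<le> (norm (x + (2 * h) *\<^sub>R y1) / 2 + norm (x + (2 * h) *\<^sub>R y2) / 2 - norm x) / h"
    unfolding norm_dquot_def using h by (intro divide_right_mono) auto
  also have "\<dots> = norm_dquot x y1 (2 * h) + norm_dquot x y2 (2 * h)"
    using h unfolding norm_dquot_def by (simp add: field_simps)
  finally show ?thesis .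
qed

lemma norm_rderiv_add_le: "norm_rderiv x (y1 + y2) \<le> norm_rderiv x y1 + norm_rderiv x y2"
proof -
  have step: "norm_rderiv x (y1 + y2) \<le> norm_dquot x y1 h1 + norm_dquot x y2 h2"
    if "0 < h1" "0 < h2" for h1 h2
  proof -
    define h where "h = min h1 h2 / 2"
    have h: "0 < h" "2 * h \<le> h1" "2 * h \<le> h2" using that by (auto simp: h_def)
    have "norm_rderiv x (y1 + y2) \<le> norm_dquot x (y1 + y2) h" by (rule norm_rderiv_le_dquot[OF h(1)])
    also have "\<dots> \<le> norm_dquot x y1 (2 * h) + norm_dquot x y2 (2 * h)" by (rule norm_dquot_add_le[OF h(1)])
    also have "\<dots> \<le> norm_dquot x y1 h1 + norm_dquot x y2 h2"
      using h by (intro add_mono norm_dquot_mono) auto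
    finally show ?thesis .
  qed
  have "norm_rderiv x (y1 + y2) - norm_dquot x y2 h2 \<le> norm_rderiv x y1" if "0 < h2" for h2
    using step that by (intro norm_rderiv_greatest) force
  then have "norm_rderiv x (y1 + y2) - norm_rderiv x y1 \<le> norm_rderiv x y2"
    by (intro norm_rderiv_greatest) force
  then show ?thesis by simp
qed

lemma norm_rderiv_scaleR_le:
  assumes t: "0 < t"
  shows "norm_rderiv x (t *\<^sub>R y) \<le> t * norm_rderiv x y"
proof -
  have "norm_rderiv x (t *\<^sub>R y) / t \<le> norm_rderiv x y"
  proof (rule norm_rderiv_greatest)
    fix h :: real assume h: "0 < h"
    have "norm_rderiv x (t *\<^sub>R y) \<le> norm_dquot x (t *\<^sub>R y) (h / t)"
      using h t by (intro norm_rderiv_le_dquot) simp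
    also have "\<dots> = t * norm_dquot x y h" unfolding norm_dquot_def using t by simp
    finally show "norm_rderiv x (t *\<^sub>R y) / t \<le> norm_dquot x y h" using t by (simp add: field_simps)
  qed
  then show ?thesis using t by (simp add: field_simps)
qed

lemma norm_rderiv_lipschitz: "norm_rderiv x y1 \<le> norm_rderiv x y2 + norm (y1 - y2)"
proof -
  have "norm_rderiv x y1 - norm (y1 - y2) \<le> norm_rderiv x y2"
  proof (rule norm_rderiv_greatest)
    fix h :: real assume h: "0 < h"
    have "x + h *\<^sub>R y1 = (x + h *\<^sub>R y2) + h *\<^sub>R (y1 - y2)" by (simp add: algebra_simps)
    then have "norm (x + h *\<^sub>R y1) \<le> norm (x + h *\<^sub>R y2) + h * norm (y1 - y2)"
      using h norm_triangle_ineq[of "x + h *\<^sub>R y2" "h *\<^sub>R (y1 - y2)"] by (metis abs_of_pos norm_scaleR)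
    then have "norm_dquot x y1 h \<le> norm_dquot x y2 h + norm (y1 - y2)"
      using h unfolding norm_dquot_def by (simp add: field_simps)
    then show "norm_rderiv x y1 - norm (y1 - y2) \<le> norm_dquot x y2 h"
      using norm_rderiv_le_dquot[OF h, of x y1] by simp
  qed
  then show ?thesis by simp
qed

lemma norm_rderiv_zero [simp]: "norm_rderiv x 0 = 0"
  using norm_rderiv_le_dquot[of 1 x 0] norm_rderiv_greatest[of 0 x 0]
  by (simp add: norm_dquot_def)

lemma continuous_on_norm_rderiv: "continuous_on S (norm_rderiv x)"
proof (rule lipschitz_on_continuous_on)
  show "1-lipschitz_on S (norm_rderiv x)"
  proof (rule lipschitz_onI)
    fix a b
    show "dist (norm_rderiv x a) (norm_rderiv x b) \<le> 1 * dist a b"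
      using norm_rderiv_lipschitz[of x a b] norm_rderiv_lipschitz[of x b a]
      by (simp add: dist_real_def dist_norm norm_minus_commute abs_le_iff)
  qed simp
qed

lemma norm_dquot_eventually_less:
  assumes "norm_rderiv x y < c"
  obtains h0 where "0 < h0" "\<And>h. 0 < h \<Longrightarrow> h \<le> h0 \<Longrightarrow> norm_dquot x y h < c"
proof -
  obtain h0 where "0 < h0" "norm_dquot x y h0 < c"
    using cInf_lessD[of "norm_dquot x y ` {0<..}" c] assms unfolding norm_rderiv_def by auto
  then show ?thesis using norm_dquot_mono[of _ h0 x y] that by force
qed

section \<open>Dini derivatives and growth estimates\<close>

lemma upper_right_dini_nonpos_imp_le:
  fixes \<phi> :: "real \<Rightarrow> real"
  assumes ab: "a \<le> b" and cont: "continuous_on {a..b} \<phi>"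
    and D: "\<And>s e. a \<le> s \<Longrightarrow> s < b \<Longrightarrow> 0 < e \<Longrightarrow>
      \<exists>d>0. \<forall>h. 0 < h \<longrightarrow> h < d \<longrightarrow> \<phi> (s + h) \<le> \<phi> s + e * h"
  shows "\<phi> b \<le> \<phi> a"
proof (rule field_le_epsilon)
  fix \<epsilon> :: real assume "0 < \<epsilon>"
  define e where "e = \<epsilon> / (b - a + 1)"
  have e: "0 < e" "e * (b - a) \<le> \<epsilon>"
    using \<open>0 < \<epsilon>\<close> ab by (auto simp: e_def field_simps)
  define \<psi> where "\<psi> r = \<phi> r - e * (r - a)" for r
  define K where "K = {a..b} \<inter> \<psi> -` {..\<phi> a}"
  have "continuous_on {a..b} \<psi>" unfolding \<psi>_def by (intro continuous_intros cont)
  then have "compact K"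
    unfolding K_def compact_eq_bounded_closed
    by (auto intro: continuous_closed_preimage bounded_subset[OF bounded_closed_interval])
  moreover have "a \<in> K" unfolding K_def \<psi>_def using ab by simp
  ultimately obtain c where c: "c \<in> K" and c_max: "\<And>r. r \<in> K \<Longrightarrow> r \<le> c"
    using compact_attains_sup[of K] by blast
  have "c = b"
  proof (rule ccontr)
    assume "c \<noteq> b"
    then have cb: "a \<le> c" "c < b" using c unfolding K_def by auto
    obtain d where d: "d > 0" "\<And>h. 0 < h \<Longrightarrow> h < d \<Longrightarrow> \<phi> (c + h) \<le> \<phi> c + e * h"
      using D[OF cb e(1)] by blast
    define h where "h = min (d / 2) (b - c)"
    have h: "0 < h" "h < d" "c + h \<le> b" using d cb unfolding h_def by auto
    have "\<psi> (c + h) \<le> \<psi> c" using d(2)[OF h(1,2)] unfolding \<psi>_def by (simp add: algebra_simps)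
    then have "c + h \<in> K" using c h cb unfolding K_def by simp
    then show False using c_max[of "c + h"] h by simp
  qed
  then show "\<phi> b \<le> \<phi> a + \<epsilon>" using c e(2) unfolding K_def \<psi>_def by simp
qed

lemma norm_rderiv_mean_value:
  fixes g :: "real \<Rightarrow> 'a::real_normed_vector"
  assumes g: "\<And>r. r \<in> {0..1} \<Longrightarrow> (g has_vector_derivative g' r) (at r within {0..1})"
    and bound: "\<And>r. r \<in> {0..1} \<Longrightarrow> norm_rderiv x (g' r) \<le> c"
  shows "norm_rderiv x (g 1 - g 0) \<le> c"
proof -
  define \<psi> where "\<psi> r = norm_rderiv x (g r - g 0) - c * r" for r
  have "continuous_on {0..1} g"
    using g has_vector_derivative_continuous continuous_on_eq_continuous_within by blast
  then have "continuous_on {0..1} \<psi>"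
    unfolding \<psi>_def
    by (intro continuous_intros continuous_on_compose2[OF continuous_on_norm_rderiv[of UNIV]]) auto
  then have "\<psi> 1 \<le> \<psi> 0"
  proof (rule upper_right_dini_nonpos_imp_le[rotated])
    fix s e :: real assume s: "0 \<le> s" "s < 1" and e: "0 < e"
    have "(g has_derivative (\<lambda>h. h *\<^sub>R g' s)) (at s within {0..1})"
      using g[of s] s by (simp add: has_vector_derivative_def)
    then obtain d where d: "d > 0" and
      dd: "\<And>y. y \<in> {0..1} \<Longrightarrow> norm (y - s) < d \<Longrightarrow> norm (g y - g s - (y - s) *\<^sub>R g' s) \<le> e * norm (y - s)"
      using e unfolding has_derivative_within_alt by blast
    have "\<psi> (s + h) \<le> \<psi> s + e * h" if h: "0 < h" "h < min d (1 - s)" for h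
    proof -
      have "norm_rderiv x (g (s + h) - g 0)
          \<le> norm_rderiv x (g s - g 0) + norm_rderiv x (h *\<^sub>R g' s) + norm (g (s + h) - g s - h *\<^sub>R g' s)"
        using norm_rderiv_add_le[of x "g s - g 0" "g (s + h) - g s"]
          norm_rderiv_lipschitz[of x "g (s + h) - g s" "h *\<^sub>R g' s"] by simp
      moreover have "norm_rderiv x (h *\<^sub>R g' s) \<le> h * c"
        using norm_rderiv_scaleR_le[OF h(1), of x "g' s"] mult_left_mono[OF bound[of s], of h] s h(1)
        by (meson atLeastAtMost_iff less_eq_real_def order.trans)
      moreover have "norm (g (s + h) - g s - h *\<^sub>R g' s) \<le> e * h" using dd[of "s + h"] s h by simp
      ultimately show ?thesis unfolding \<psi>_def by (simp add: algebra_simps)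
    qed
    then show "\<exists>d>0. \<forall>h. 0 < h \<longrightarrow> h < d \<longrightarrow> \<psi> (s + h) \<le> \<psi> s + e * h"
      using d s by (intro exI[of _ "min d (1 - s)"]) auto
  qed simp
  then show ?thesis unfolding \<psi>_def by simp
qed

lemma norm_rderiv_increment_le:
  fixes F :: "'a::real_normed_vector \<Rightarrow> 'a"
  assumes F: "\<And>r. r \<in> {0..1} \<Longrightarrow> (F has_derivative F' (p + r *\<^sub>R z)) (at (p + r *\<^sub>R z))"
    and bound: "\<And>r. r \<in> {0..1} \<Longrightarrow> norm_rderiv x (F' (p + r *\<^sub>R z) z) \<le> c"
  shows "norm_rderiv x (F (p + z) - F p) \<le> c"
proof -
  have "((\<lambda>r. F (p + r *\<^sub>R z)) has_vector_derivative F' (p + r *\<^sub>R z) z) (at r within {0..1})"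
    if "r \<in> {0..1}" for r
  proof -
    have "((\<lambda>r. p + r *\<^sub>R z) has_derivative (\<lambda>h. h *\<^sub>R z)) (at r within {0..1})"
      by (auto intro!: derivative_eq_intros)
    from diff_chain_within[OF this has_derivative_at_withinI[OF F[OF that]]]
    have "((\<lambda>r. F (p + r *\<^sub>R z)) has_derivative (\<lambda>h. F' (p + r *\<^sub>R z) (h *\<^sub>R z))) (at r within {0..1})"
      by (simp add: o_def)
    moreover have "F' (p + r *\<^sub>R z) (h *\<^sub>R z) = h *\<^sub>R F' (p + r *\<^sub>R z) z" for h
      using linear_scale[OF has_derivative_linear[OF F[OF that]]] .
    ultimately show ?thesis by (simp add: has_vector_derivative_def)
  qed
  from norm_rderiv_mean_value[OF this bound] show ?thesis by simp
qed

lemma norm_right_increment_le: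
  fixes x :: "real \<Rightarrow> 'a::real_normed_vector"
  assumes x: "(x has_vector_derivative v) (at s within {s..})" and e: "0 < e"
  obtains d where "0 < d"
    "\<And>h. 0 < h \<Longrightarrow> h < d \<Longrightarrow> norm (x (s + h)) \<le> norm (x s) + h * (norm_rderiv (x s) v + e)"
proof -
  obtain d1 where d1: "d1 > 0" and
    dd: "\<And>y. y \<in> {s..} \<Longrightarrow> norm (y - s) < d1 \<Longrightarrow> norm (x y - x s - (y - s) *\<^sub>R v) \<le> e / 2 * norm (y - s)"
    using x e unfolding has_vector_derivative_def has_derivative_within_alt by (meson half_gt_zero)
  obtain h0 where h0: "0 < h0" "\<And>h. 0 < h \<Longrightarrow> h \<le> h0 \<Longrightarrow> norm_dquot (x s) v h < norm_rderiv (x s) v + e / 2"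
    using norm_dquot_eventually_less[of "x s" v "norm_rderiv (x s) v + e / 2"] e by auto
  have "norm (x (s + h)) \<le> norm (x s) + h * (norm_rderiv (x s) v + e)" if h: "0 < h" "h < min d1 h0" for h
  proof -
    have "norm (x (s + h)) \<le> norm (x s + h *\<^sub>R v) + norm (x (s + h) - x s - h *\<^sub>R v)"
      using norm_triangle_ineq[of "x s + h *\<^sub>R v" "x (s + h) - x s - h *\<^sub>R v"] by simp
    also have "norm (x s + h *\<^sub>R v) = norm (x s) + h * norm_dquot (x s) v h"
      using h unfolding norm_dquot_def by simp
    also have "norm (x (s + h) - x s - h *\<^sub>R v) \<le> e / 2 * h"
      using dd[of "s + h"] h by simp
    also have "h * norm_dquot (x s) v h \<le> h * (norm_rderiv (x s) v + e / 2)"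
      using h0(2)[of h] h by (intro mult_left_mono) auto
    finally show ?thesis by (simp add: algebra_simps)
  qed
  then show ?thesis using d1 h0(1) that[of "min d1 h0"] by simp
qed

lemma right_dini_gronwall:
  fixes n :: "real \<Rightarrow> real"
  assumes T: "0 \<le> T" and cont: "continuous_on {0..T} n" and nonneg: "\<And>s. 0 \<le> n s"
    and D: "\<And>s e. 0 \<le> s \<Longrightarrow> s < T \<Longrightarrow> 0 < e \<Longrightarrow>
      \<exists>d>0. \<forall>h. 0 < h \<longrightarrow> h < d \<longrightarrow> n (s + h) \<le> n s + h * (lam * n s + e)"
  shows "n T \<le> n 0 * exp (lam * T)"
proof -
  define \<psi> where "\<psi> r = exp (- lam * r) * n r" for r
  have "\<psi> T \<le> \<psi> 0"
  proof (rule upper_right_dini_nonpos_imp_le[OF T])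
    show "continuous_on {0..T} \<psi>" unfolding \<psi>_def by (intro continuous_intros cont)
  next
    fix s e :: real assume s: "0 \<le> s" "s < T" and e: "0 < e"
    define A where "A = exp (- lam * s)"
    \<comment> \<open>E bounds the weight exp (- lam * (s + h)) for 0 < h < 1\<close>
    define E where "E = A * exp \<bar>lam\<bar>"
    have A: "0 < A" and E: "0 < E" by (simp_all add: A_def E_def)
    obtain d where d: "d > 0" and
      dn: "\<And>h. 0 < h \<Longrightarrow> h < d \<Longrightarrow> n (s + h) \<le> n s + h * (lam * n s + e / E)"
      using D[OF s, of "e / E"] e E by auto
    have "\<psi> (s + h) \<le> \<psi> s + e * h" if h: "0 < h" "h < min d 1" for h
    proof -
      define B where "B = exp (- lam * h)"
      have "- lam * h \<le> \<bar>lam\<bar> * h" "\<bar>lam\<bar> * h \<le> \<bar>lam\<bar>"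
        using h mult_right_mono[of "- lam" "\<bar>lam\<bar>" h] mult_left_le[of h "\<bar>lam\<bar>"] by auto
      moreover have "B * (1 + lam * h) \<le> B * exp (lam * h)"
        by (simp add: B_def exp_ge_add_one_self)
      ultimately have B: "0 < B" "B \<le> exp \<bar>lam\<bar>" "B * (1 + lam * h) \<le> 1"
        by (simp_all add: B_def flip: exp_add)
      have "\<psi> (s + h) = A * B * n (s + h)"
        unfolding \<psi>_def A_def B_def by (simp add: algebra_simps flip: exp_add)
      also have "\<dots> \<le> A * B * (n s + h * (lam * n s + e / E))"
        using dn[of h] h A B by simp
      also have "\<dots> = A * n s * (B * (1 + lam * h)) + h * e * (A * B / E)"
        using E by (simp add: field_simps)
      also have "\<dots> \<le> A * n s * 1 + h * e * 1"
        using A B E h e nonneg[of s]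
        by (intro add_mono mult_left_mono) (auto simp: E_def)
      finally show ?thesis unfolding \<psi>_def A_def by (simp add: mult.commute)
    qed
    then show "\<exists>d>0. \<forall>h. 0 < h \<longrightarrow> h < d \<longrightarrow> \<psi> (s + h) \<le> \<psi> s + e * h"
      using d by (intro exI[of _ "min d 1"]) auto
  qed
  then have "n T \<le> exp (lam * T) * n 0"
    unfolding \<psi>_def by (simp add: exp_minus field_simps)
  then show ?thesis by (simp add: mult.commute)
qed

lemma norm_exponential_bound:
  fixes x :: "real \<Rightarrow> 'a::real_normed_vector"
  assumes deriv: "\<And>s. 0 \<le> s \<Longrightarrow> (x has_vector_derivative x' s) (at s within {0..})"
    and slope: "\<And>s. 0 \<le> s \<Longrightarrow> norm_rderiv (x s) (x' s) \<le> lam * norm (x s)"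
    and T: "0 \<le> T"
  shows "norm (x T) \<le> norm (x 0) * exp (lam * T)"
proof (rule right_dini_gronwall[OF T])
  have "continuous_on {0..} x"
    by (metis atLeast_iff continuous_on_eq_continuous_within deriv has_vector_derivative_continuous)
  then show "continuous_on {0..T} (\<lambda>s. norm (x s))"
    by (rule continuous_on_norm[OF continuous_on_subset]) auto
next
  fix s e :: real assume s: "0 \<le> s" "s < T" and e: "0 < e"
  have "(x has_vector_derivative x' s) (at s within {s..})"
    using deriv[OF s(1)] by (rule has_vector_derivative_within_subset) (use s in auto)
  then obtain d where "0 < d" and
    d: "\<And>h. 0 < h \<Longrightarrow> h < d \<Longrightarrow> norm (x (s + h)) \<le> norm (x s) + h * (norm_rderiv (x s) (x' s) + e)"
    using norm_right_increment_le e by blast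
  moreover have "norm (x (s + h)) \<le> norm (x s) + h * (lam * norm (x s) + e)" if "0 < h" "h < d" for h
  proof -
    have "h * (norm_rderiv (x s) (x' s) + e) \<le> h * (lam * norm (x s) + e)"
      using slope[OF s(1)] that by (intro mult_left_mono) auto
    then show ?thesis using d[OF that] by linarith
  qed
  ultimately show "\<exists>d>0. \<forall>h. 0 < h \<longrightarrow> h < d \<longrightarrow> norm (x (s + h)) \<le> norm (x s) + h * (lam * norm (x s) + e)"
    by blast
qed simp

section \<open>Convergence to the fixed space\<close>

lemma has_derivative_second_argument:
  assumes "((\<lambda>p. f (fst p) (snd p)) has_derivative D) (at (t, u) within S \<times> UNIV)" and "t \<in> S"
  shows "(f t has_derivative (\<lambda>v. D (0, v))) (at u)"
proof -
  have "((\<lambda>v. (t, v)) has_derivative (\<lambda>v. (0, v))) (at u)"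
    by (auto intro!: derivative_eq_intros)
  from diff_chain_within[OF this has_derivative_subset[OF assms(1)]] assms(2)
  show ?thesis by (auto simp: o_def)
qed

lemma equivariant_maps_fixed_space:
  assumes "\<And>T. T \<in> G \<Longrightarrow> g (T u) = T (g u)" and "u \<in> fixed_space G"
  shows "g u \<in> fixed_space G"
proof -
  have "T (g u) = g u" if "T \<in> G" for T
  proof -
    have "T u = u" using assms(2) that by (simp add: fixed_space_def)
    then show ?thesis using assms(1)[OF that] by simp
  qed
  then show ?thesis by (simp add: fixed_space_def)
qed

lemma projection_complement_exponential_bound:
  fixes P :: "'a::real_normed_vector \<Rightarrow> 'a"
    and f :: "real \<Rightarrow> 'a \<Rightarrow> 'a"
    and f' :: "real \<times> 'a \<Rightarrow> (real \<times> 'a) \<Rightarrow>\<^sub>L 'a"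
  assumes P: "bounded_linear P" "\<And>v. P (P v) = P v"
    and deriv: "\<And>t u. t \<ge> 0 \<Longrightarrow>
        ((\<lambda>p. f (fst p) (snd p)) has_derivative blinfun_apply (f' (t, u))) (at (t, u) within {0..} \<times> UNIV)"
    and invariant: "\<And>t v. 0 \<le> t \<Longrightarrow> P (f t (P v)) = f t (P v)"
    and dissipative: "\<And>t u w. 0 \<le> t \<Longrightarrow> w - P w \<noteq> 0 \<Longrightarrow>
        semi_inner_plus (w - P w) (f' (t, u) (0, w) - P (f' (t, u) (0, w))) / (norm (w - P w))\<^sup>2 \<le> lam"
    and sol: "is_solution f u" and T: "0 \<le> T"
  shows "norm (u T - P (u T)) \<le> norm (u 0 - P (u 0)) * exp (lam * T)"
proof -
  define Q where "Q v = v - P v" for v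
  have Q: "bounded_linear Q"
    unfolding Q_def using P(1) by (intro bounded_linear_sub bounded_linear_ident)
  have PQ: "P (Q v) = 0" for v
    unfolding Q_def using P by (simp add: linear_diff bounded_linear.linear)
  have slope: "norm_rderiv z (Q (f t (P v + z))) \<le> lam * norm z" if t: "0 \<le> t" and z: "P z = 0" for t v z
  proof (cases "z = 0")
    case True
    then show ?thesis using invariant[OF t] by (simp add: Q_def)
  next
    case False
    have "((\<lambda>v. Q (f t v)) has_derivative (\<lambda>v. Q (f' (t, w) (0, v)))) (at w)" for w
      using bounded_linear.has_derivative[OF Q has_derivative_second_argument[OF deriv[OF t]]] t by simp
    moreover have "norm_rderiv z (Q (f' (t, w) (0, z))) \<le> lam * norm z" for w
      using dissipative[OF t, of z w] z False
      by (intro norm_rderiv_le_of_semi_inner_plus) (simp_all add: Q_def)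
    ultimately have "norm_rderiv z (Q (f t (P v + z)) - Q (f t (P v))) \<le> lam * norm z"
      by (intro norm_rderiv_increment_le)
    moreover have "Q (f t (P v)) = 0" using invariant[OF t] by (simp add: Q_def)
    ultimately show ?thesis by simp
  qed
  obtain u' where u': "\<And>t. 0 \<le> t \<Longrightarrow> (u has_vector_derivative u' t) (at t within {0..}) \<and> u' t = f t (u t)"
    using sol unfolding is_solution_def by blast
  have "norm (Q (u T)) \<le> norm (Q (u 0)) * exp (lam * T)"
  proof (rule norm_exponential_bound[OF _ _ T])
    show "((\<lambda>t. Q (u t)) has_vector_derivative Q (u' s)) (at s within {0..})" if "0 \<le> s" for s
      using bounded_linear.has_vector_derivative[OF Q] u' that by blast
    have "u s = P (u s) + Q (u s)" for s by (simp add: Q_def)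
    then show "norm_rderiv (Q (u s)) (Q (u' s)) \<le> lam * norm (Q (u s))" if "0 \<le> s" for s
      using slope[OF that PQ, of "u s" "u s"] u' that by metis
  qed
  then show ?thesis by (simp add: Q_def)
qed

theorem mainTheorem11:
  fixes G :: "('a::banach \<Rightarrow> 'a) set"
    and f :: "real \<Rightarrow> 'a \<Rightarrow> 'a"
    and f' :: "real \<times> 'a \<Rightarrow> (real \<times> 'a) \<Rightarrow>\<^sub>L 'a"
  assumes grp: "operator_subgroup G"
    and C1_deriv: "\<And>t u. t \<ge> 0 \<Longrightarrow>
        ((\<lambda>p. f (fst p) (snd p)) has_derivative blinfun_apply (f' (t, u))) (at (t, u) within {0..} \<times> UNIV)"
    and C1_cont: "continuous_on ({0..} \<times> UNIV) f'"
    and equivariant: "\<And>T t u. T \<in> G \<Longrightarrow> t \<ge> 0 \<Longrightarrow> f t (T u) = T (f t u)"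
    and fin_dim: "\<exists>B. finite B \<and> span B = fixed_space G"
    and ivp_exists: "\<And>u0. \<exists>u. is_solution f u \<and> u 0 = u0"
    and ivp_unique: "\<And>u1 u2 t. is_solution f u1 \<Longrightarrow> is_solution f u2 \<Longrightarrow> u1 0 = u2 0 \<Longrightarrow> t \<ge> 0 \<Longrightarrow> u1 t = u2 t"
  shows "\<exists>P. bounded_linear P \<and> (\<forall>v. P (P v) = P v) \<and> range P = fixed_space G \<and>
           (\<forall>t\<ge>0. \<forall>v. f t (P v) - P (f t (P v)) = 0) \<and>
           (\<forall>lam::real. lam < 0 \<longrightarrow>
              (\<forall>t\<ge>0. \<forall>u w. w - P w \<noteq> 0 \<longrightarrow>
                 semi_inner_plus (w - P w)
                   (blinfun_apply (f' (t, u)) (0, w) - P (blinfun_apply (f' (t, u)) (0, w)))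
                   / (norm (w - P w))\<^sup>2 \<le> lam) \<longrightarrow>
              (\<forall>u. is_solution f u \<longrightarrow> (\<exists>K. \<forall>t\<ge>0. infdist (u t) (fixed_space G) \<le> K * exp (lam * t))))"
proof -
  obtain B where B: "finite B" "span B = fixed_space G" using fin_dim by blast
  obtain P where P: "bounded_linear P" "\<And>v. P v \<in> fixed_space G" "\<And>v. v \<in> fixed_space G \<Longrightarrow> P v = v"
    using finite_span_bounded_projection[OF B(1)] unfolding B(2) by blast
  have PP: "\<forall>v. P (P v) = P v" using P by blast
  have range: "range P = fixed_space G" using P by (metis image_subset_iff range_eqI subsetI subset_antisym)
  have invariant: "P (f t (P v)) = f t (P v)" if "0 \<le> t" for t v
    using P equivariant_maps_fixed_space[of G "f t" "P v"] equivariant[OF _ that] by metis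
  have decay: "\<exists>K. \<forall>t\<ge>0. infdist (u t) (fixed_space G) \<le> K * exp (lam * t)"
    if "\<forall>t\<ge>0. \<forall>u w. w - P w \<noteq> 0 \<longrightarrow> semi_inner_plus (w - P w)
          (blinfun_apply (f' (t, u)) (0, w) - P (blinfun_apply (f' (t, u)) (0, w))) / (norm (w - P w))\<^sup>2 \<le> lam"
      and "is_solution f u" for lam u
  proof (intro exI allI impI)
    fix t :: real assume "0 \<le> t"
    have "infdist (u t) (fixed_space G) \<le> norm (u t - P (u t))"
      using infdist_le[OF P(2)] by (simp add: dist_norm)
    also have "\<dots> \<le> norm (u 0 - P (u 0)) * exp (lam * t)"
      using projection_complement_exponential_bound[OF P(1) _ C1_deriv invariant _ that(2) \<open>0 \<le> t\<close>]
        PP that(1) by blast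
    finally show "infdist (u t) (fixed_space G) \<le> norm (u 0 - P (u 0)) * exp (lam * t)" .
  qed
  show ?thesis
    using P(1) PP range invariant by (intro exI[of _ P] conjI allI impI decay) auto
qed

end
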